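(* Let $b\ge 2$ be an integer and $p\ge 5$ a prime. Then every extra-special $p$-group $G$ of order $p^{4b+1}$ admits a diagonal double Kodaira structure of non-strong type $(b,\,p)$.
   Context: Notation: $[x,y]=xyx^{-1}y^{-1}$; $o(x)$ is the order of $x$. Definition (diagonal double Kodaira structure). Let $G$ be a finite group and $b,n\ge 2$ integers. A diagonal double Kodaira structure of type $(b,n)$ on $G$ is a set of $4b+1$ elements $\mathsf{r}_{11},\mathsf{t}_{11},\dots,\mathsf{r}_{1b},\mathsf{t}_{1b},\mathsf{r}_{21},\mathsf{t}_{21},\dots,\mathsf{r}_{2b},\mathsf{t}_{2b},\mathsf{z}$ which generate $G$, with $o(\mathsf{z})=n$, satisfying the following relations for all $j,k\in\{1,\dots,b\}$: (Surface relations) $[\mathsf{r}_{1b}^{-1},\mathsf{t}_{1b}^{-1}]\,\mathsf{t}_{1b}^{-1}\,[\mathsf{r}_{1,b-1}^{-1},\mathsf{t}_{1,b-1}^{-1}]\,\mathsf{t}_{1,b-1}^{-1}\cdots[\mathsf{r}_{11}^{-1},\mathsf{t}_{11}^{-1}]\,\mathsf{t}_{11}^{-1}\,(\mathsf{t}_{11}\mathsf{t}_{12}\cdots\mathsf{t}_{1b})=\mathsf{z}$, $[\mathsf{r}_{21}^{-1},\mathsf{t}_{21}]\,\mathsf{t}_{21}\,[\mathsf{r}_{22}^{-1},\mathsf{t}_{22}]\,\mathsf{t}_{22}\cdots[\mathsf{r}_{2b}^{-1},\mathsf{t}_{2b}]\,\mathsf{t}_{2b}\,(\mathsf{t}_{2b}^{-1}\mathsf{t}_{2,b-1}^{-1}\cdots\mathsf{t}_{21}^{-1})=\mathsf{z}^{-1}$.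 (Action of $\mathsf{r}_{1j}$) $[\mathsf{r}_{1j},\mathsf{r}_{2k}]=1$ if $j<k$; $[\mathsf{r}_{1j},\mathsf{r}_{2j}]=1$; $[\mathsf{r}_{1j},\mathsf{r}_{2k}]=\mathsf{z}^{-1}\mathsf{r}_{2k}\mathsf{r}_{2j}^{-1}\mathsf{z}\mathsf{r}_{2j}\mathsf{r}_{2k}^{-1}$ if $j>k$; $[\mathsf{r}_{1j},\mathsf{t}_{2k}]=1$ if $j<k$; $[\mathsf{r}_{1j},\mathsf{t}_{2j}]=\mathsf{z}^{-1}$; $[\mathsf{r}_{1j},\mathsf{t}_{2k}]=[\mathsf{z}^{-1},\mathsf{t}_{2k}]$ if $j>k$; $[\mathsf{r}_{1j},\mathsf{z}]=[\mathsf{r}_{2j}^{-1},\mathsf{z}]$. (Action of $\mathsf{t}_{1j}$) $[\mathsf{t}_{1j},\mathsf{r}_{2k}]=1$ if $j<k$; $[\mathsf{t}_{1j},\mathsf{r}_{2j}]=\mathsf{t}_{2j}^{-1}\mathsf{z}\mathsf{t}_{2j}$; $[\mathsf{t}_{1j},\mathsf{r}_{2k}]=[\mathsf{t}_{2j}^{-1},\mathsf{z}]$ if $j>k$; $[\mathsf{t}_{1j},\mathsf{t}_{2k}]=1$ if $j<k$; $[\mathsf{t}_{1j},\mathsf{t}_{2j}]=[\mathsf{t}_{2j}^{-1},\mathsf{z}]$; $[\mathsf{t}_{1j},\mathsf{t}_{2k}]=\mathsf{t}_{2j}^{-1}\mathsf{z}\mathsf{t}_{2j}\mathsf{z}^{-1}\mathsf{t}_{2k}\mathsf{z}\mathsf{t}_{2j}^{-1}\mathsf{z}^{-1}\mathsf{t}_{2j}\mathsf{t}_{2k}^{-1}$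 if $j>k$; $[\mathsf{t}_{1j},\mathsf{z}]=[\mathsf{t}_{2j}^{-1},\mathsf{z}]$. Such a structure is of strong type $(b,n)$ if both $K_1:=\langle \mathsf{r}_{11},\mathsf{t}_{11},\dots,\mathsf{r}_{1b},\mathsf{t}_{1b},\mathsf{z}\rangle$ and $K_2:=\langle \mathsf{r}_{21},\mathsf{t}_{21},\dots,\mathsf{r}_{2b},\mathsf{t}_{2b},\mathsf{z}\rangle$ equal $G$, and of non-strong type otherwise. Definition. For a prime $p$, a finite $p$-group $G$ is extra-special if its center $Z(G)$ is cyclic of order $p$ and $G/Z(G)$ is a non-trivial elementary abelian $p$-group. *)

theory Defs
  imports "HOL-Algebra.Algebra"
begin

definition gcomm :: "('a, 'b) monoid_scheme \<Rightarrow> 'a \<Rightarrow> 'a \<Rightarrow> 'a" where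
  "gcomm G x y = x \<otimes>\<^bsub>G\<^esub> y \<otimes>\<^bsub>G\<^esub> inv\<^bsub>G\<^esub> x \<otimes>\<^bsub>G\<^esub> inv\<^bsub>G\<^esub> y"

definition gprod :: "('a, 'b) monoid_scheme \<Rightarrow> 'a list \<Rightarrow> 'a" where
  "gprod G xs = foldr (\<lambda>x y. x \<otimes>\<^bsub>G\<^esub> y) xs \<one>\<^bsub>G\<^esub>"

definition group_center :: "('a, 'b) monoid_scheme \<Rightarrow> 'a set" where
  "group_center G = {z \<in> carrier G. \<forall>x \<in> carrier G. z \<otimes>\<^bsub>G\<^esub> x = x \<otimes>\<^bsub>G\<^esub> z}"

definition diagonal_double_kodaira ::
  "('a, 'b) monoid_scheme \<Rightarrow> nat \<Rightarrow> nat \<Rightarrow> (nat \<Rightarrow> 'a) \<Rightarrow> (nat \<Rightarrow> 'a)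
     \<Rightarrow> (nat \<Rightarrow> 'a) \<Rightarrow> (nat \<Rightarrow> 'a) \<Rightarrow> 'a \<Rightarrow> bool" where
  "diagonal_double_kodaira G b n r1 t1 r2 t2 z \<longleftrightarrow>
     (\<forall>j\<in>{1..b}. r1 j \<in> carrier G \<and> t1 j \<in> carrier G \<and> r2 j \<in> carrier G \<and> t2 j \<in> carrier G)
   \<and> z \<in> carrier G
   \<and> generate G (r1 ` {1..b} \<union> t1 ` {1..b} \<union> r2 ` {1..b} \<union> t2 ` {1..b} \<union> {z}) = carrier G
   \<and> group.ord G z = n
   \<comment> \<open>surface relations\<close>
   \<and> gprod G (map (\<lambda>j. gcomm G (inv\<^bsub>G\<^esub> (r1 j)) (inv\<^bsub>G\<^esub> (t1 j)) \<otimes>\<^bsub>G\<^esub> inv\<^bsub>G\<^esub> (t1 j)) (rev [1..<b+1]))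
       \<otimes>\<^bsub>G\<^esub> gprod G (map t1 [1..<b+1]) = z
   \<and> gprod G (map (\<lambda>j. gcomm G (inv\<^bsub>G\<^esub> (r2 j)) (t2 j) \<otimes>\<^bsub>G\<^esub> t2 j) [1..<b+1])
       \<otimes>\<^bsub>G\<^esub> gprod G (map (\<lambda>j. inv\<^bsub>G\<^esub> (t2 j)) (rev [1..<b+1])) = inv\<^bsub>G\<^esub> z
   \<and> (\<forall>j\<in>{1..b}. \<forall>k\<in>{1..b}.
      \<comment> \<open>action of r_{1j}\<close>
        (j < k \<longrightarrow> gcomm G (r1 j) (r2 k) = \<one>\<^bsub>G\<^esub>)
      \<and> (j = k \<longrightarrow> gcomm G (r1 j) (r2 k) = \<one>\<^bsub>G\<^esub>)
      \<and> (j > k \<longrightarrow> gcomm G (r1 j) (r2 k) =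
            inv\<^bsub>G\<^esub> z \<otimes>\<^bsub>G\<^esub> r2 k \<otimes>\<^bsub>G\<^esub> inv\<^bsub>G\<^esub> (r2 j) \<otimes>\<^bsub>G\<^esub> z \<otimes>\<^bsub>G\<^esub> r2 j \<otimes>\<^bsub>G\<^esub> inv\<^bsub>G\<^esub> (r2 k))
      \<and> (j < k \<longrightarrow> gcomm G (r1 j) (t2 k) = \<one>\<^bsub>G\<^esub>)
      \<and> (j = k \<longrightarrow> gcomm G (r1 j) (t2 k) = inv\<^bsub>G\<^esub> z)
      \<and> (j > k \<longrightarrow> gcomm G (r1 j) (t2 k) = gcomm G (inv\<^bsub>G\<^esub> z) (t2 k))
      \<comment> \<open>action of t_{1j}\<close>
      \<and> (j < k \<longrightarrow> gcomm G (t1 j) (r2 k) = \<one>\<^bsub>G\<^esub>)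
      \<and> (j = k \<longrightarrow> gcomm G (t1 j) (r2 k) = inv\<^bsub>G\<^esub> (t2 j) \<otimes>\<^bsub>G\<^esub> z \<otimes>\<^bsub>G\<^esub> t2 j)
      \<and> (j > k \<longrightarrow> gcomm G (t1 j) (r2 k) = gcomm G (inv\<^bsub>G\<^esub> (t2 j)) z)
      \<and> (j < k \<longrightarrow> gcomm G (t1 j) (t2 k) = \<one>\<^bsub>G\<^esub>)
      \<and> (j = k \<longrightarrow> gcomm G (t1 j) (t2 k) = gcomm G (inv\<^bsub>G\<^esub> (t2 j)) z)
      \<and> (j > k \<longrightarrow> gcomm G (t1 j) (t2 k) =
            inv\<^bsub>G\<^esub> (t2 j) \<otimes>\<^bsub>G\<^esub> z \<otimes>\<^bsub>G\<^esub> t2 j \<otimes>\<^bsub>G\<^esub> inv\<^bsub>G\<^esub> z \<otimes>\<^bsub>G\<^esub> t2 k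
            \<otimes>\<^bsub>G\<^esub> z \<otimes>\<^bsub>G\<^esub> inv\<^bsub>G\<^esub> (t2 j) \<otimes>\<^bsub>G\<^esub> inv\<^bsub>G\<^esub> z \<otimes>\<^bsub>G\<^esub> t2 j \<otimes>\<^bsub>G\<^esub> inv\<^bsub>G\<^esub> (t2 k)))
   \<and> (\<forall>j\<in>{1..b}.
        gcomm G (r1 j) z = gcomm G (inv\<^bsub>G\<^esub> (r2 j)) z
      \<and> gcomm G (t1 j) z = gcomm G (inv\<^bsub>G\<^esub> (t2 j)) z)"

text \<open>Strong type: both K1 and K2 equal G.\<close>
definition ddk_strong ::
  "('a, 'b) monoid_scheme \<Rightarrow> nat \<Rightarrow> (nat \<Rightarrow> 'a) \<Rightarrow> (nat \<Rightarrow> 'a)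
     \<Rightarrow> (nat \<Rightarrow> 'a) \<Rightarrow> (nat \<Rightarrow> 'a) \<Rightarrow> 'a \<Rightarrow> bool" where
  "ddk_strong G b r1 t1 r2 t2 z \<longleftrightarrow>
     generate G (r1 ` {1..b} \<union> t1 ` {1..b} \<union> {z}) = carrier G
   \<and> generate G (r2 ` {1..b} \<union> t2 ` {1..b} \<union> {z}) = carrier G"

definition extra_special :: "('a, 'b) monoid_scheme \<Rightarrow> nat \<Rightarrow> bool" where
  "extra_special G p \<longleftrightarrow>
     Factorial_Ring.prime p \<and> finite (carrier G) \<and> (\<exists>k. order G = p ^ k)
   \<and> cyclic_group (subgroup_generated G (group_center G))
   \<and> card (group_center G) = p
   \<and> comm_group (G Mod (group_center G))
   \<and> (\<forall>c \<in> carrier (G Mod (group_center G)). c [^]\<^bsub>G Mod (group_center G)\<^esub> p = \<one>\<^bsub>G Mod (group_center G)\<^esub>)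
   \<and> carrier (G Mod (group_center G)) \<noteq> {\<one>\<^bsub>G Mod (group_center G)\<^esub>}"

end

theory Submission
  imports Defs
begin

text \<open>
  If G/Z(G) is abelian, commutators are central and [-,-] is bilinear. In an extra-special
  group of order p^(4b+1) they are powers of a generator z of the centre, which has order p.
  For a set S and a noncentral x in its centraliser C there is y in C with [x,y] = z, and
  (i, j, c) \<mapsto> (x^i y^j)^-1 c is a bijection from {0..p-1}^2 \<times> C' onto C, where C' is the
  centraliser of S \<union> {x, y}. Splitting off 2b such hyperbolic pairs shrinks C to Z(G) and
  yields a symplectic basis A_i, B_i ([A_i, B_j] = z if i = j, all other commutators trivial)
  that generates G together with z.

  As z is central, the Kodaira relations reduce to commutator identities. They hold for
  r_1j = A_j, t_1j = A_(b+j), r_2j = B_(b+j), t_2j = B_j^-1, twisted at r_11 and t_22 so that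
  the surface relations produce z and z^-1. All generators of K_1 commute with A_2, but B_2
  does not, so K_1 is a proper subgroup.
\<close>

definition centralizer :: "('a, 'b) monoid_scheme \<Rightarrow> 'a set \<Rightarrow> 'a set" where
  "centralizer G S = {g \<in> carrier G. \<forall>a \<in> S. g \<otimes>\<^bsub>G\<^esub> a = a \<otimes>\<^bsub>G\<^esub> g}"

definition symplectic_family ::
  "('a, 'b) monoid_scheme \<Rightarrow> 'a \<Rightarrow> nat \<Rightarrow> (nat \<Rightarrow> 'a) \<Rightarrow> (nat \<Rightarrow> 'a) \<Rightarrow> bool" where
  "symplectic_family G z n A B \<longleftrightarrow>
     (\<forall>i \<in> {1..n}. A i \<in> carrier G \<and> B i \<in> carrier G)
   \<and> (\<forall>i \<in> {1..n}. \<forall>j \<in> {1..n}.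
        gcomm G (A i) (B j) = (if i = j then z else \<one>\<^bsub>G\<^esub>)
      \<and> gcomm G (A i) (A j) = \<one>\<^bsub>G\<^esub> \<and> gcomm G (B i) (B j) = \<one>\<^bsub>G\<^esub>)"

lemma group_center_eq_centralizer: "group_center G = centralizer G (carrier G)"
  unfolding group_center_def centralizer_def by simp

context group begin

lemma inv_mult_cancel_left [simp]: "x \<in> carrier G \<Longrightarrow> y \<in> carrier G \<Longrightarrow> inv x \<otimes> (x \<otimes> y) = y"
  by (simp flip: m_assoc)

lemma mult_inv_cancel_left [simp]: "x \<in> carrier G \<Longrightarrow> y \<in> carrier G \<Longrightarrow> x \<otimes> (inv x \<otimes> y) = y"
  by (simp flip: m_assoc)

lemma subgroup_nat_pow_closed: "subgroup H G \<Longrightarrow> h \<in> H \<Longrightarrow> h [^] (n::nat) \<in> H"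
  by (induction n) (simp_all add: subgroup.one_closed subgroup.m_closed)

lemma centralizer_subgroup:
  assumes "S \<subseteq> carrier G"
  shows "subgroup (centralizer G S) G"
proof (rule subgroupI)
  show "centralizer G S \<subseteq> carrier G" "centralizer G S \<noteq> {}"
    unfolding centralizer_def using assms by (auto intro!: exI[of _ \<one>])
next
  fix g h assume g: "g \<in> centralizer G S" and h: "h \<in> centralizer G S"
  then have gh: "g \<in> carrier G" "h \<in> carrier G" unfolding centralizer_def by auto
  show "inv g \<in> centralizer G S"
    unfolding centralizer_def
  proof (intro CollectI conjI ballI)
    fix a assume a: "a \<in> S"
    then have "g \<otimes> a = a \<otimes> g" "a \<in> carrier G" using g assms unfolding centralizer_def by auto
    then have "inv g \<otimes> (g \<otimes> a) \<otimes> inv g = inv g \<otimes> (a \<otimes> g) \<otimes> inv g" by simp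
    then show "inv g \<otimes> a = a \<otimes> inv g"
      using gh \<open>a \<in> carrier G\<close> by (simp add: m_assoc flip: m_assoc[of "inv g" g])
  qed (use gh in simp)
  show "g \<otimes> h \<in> centralizer G S"
    unfolding centralizer_def
  proof (intro CollectI conjI ballI)
    fix a assume a: "a \<in> S"
    then have "g \<otimes> a = a \<otimes> g" "h \<otimes> a = a \<otimes> h" "a \<in> carrier G"
      using g h assms unfolding centralizer_def by auto
    then show "g \<otimes> h \<otimes> a = a \<otimes> (g \<otimes> h)"
      using gh by (metis m_assoc)
  qed (use gh in simp)
qed

lemma center_subset: "group_center G \<subseteq> carrier G"
  unfolding group_center_def by auto

lemma center_carrier: "c \<in> group_center G \<Longrightarrow> c \<in> carrier G"
  unfolding group_center_def by auto

lemma center_subgroup: "subgroup (group_center G) G"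
  by (simp add: group_center_eq_centralizer centralizer_subgroup)

lemma center_normal: "group_center G \<lhd> G"
  unfolding normal_inv_iff
proof (intro conjI ballI center_subgroup)
  fix x h assume x: "x \<in> carrier G" and h: "h \<in> group_center G"
  then have "x \<otimes> h = h \<otimes> x" "h \<in> carrier G" unfolding group_center_def by auto
  then show "x \<otimes> h \<otimes> inv x \<in> group_center G" using x h by (simp add: m_assoc)
qed

lemma center_commute: "c \<in> group_center G \<Longrightarrow> g \<in> carrier G \<Longrightarrow> c \<otimes> g = g \<otimes> c"
  unfolding group_center_def by auto

lemma center_conj: "c \<in> group_center G \<Longrightarrow> w \<in> carrier G \<Longrightarrow> inv w \<otimes> c \<otimes> w = c"
  unfolding group_center_def by (simp add: m_assoc flip: m_assoc[of "inv w" w])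

lemma gcomm_closed [simp]: "x \<in> carrier G \<Longrightarrow> y \<in> carrier G \<Longrightarrow> gcomm G x y \<in> carrier G"
  unfolding gcomm_def by simp

lemma gcomm_eq_one_iff: "x \<in> carrier G \<Longrightarrow> y \<in> carrier G \<Longrightarrow> gcomm G x y = \<one> \<longleftrightarrow> x \<otimes> y = y \<otimes> x"
proof -
  assume xy: "x \<in> carrier G" "y \<in> carrier G"
  have "gcomm G x y \<otimes> (y \<otimes> x) = x \<otimes> y"
    unfolding gcomm_def using xy by (simp add: m_assoc)
  then show ?thesis using xy by (metis gcomm_closed l_one m_closed r_cancel_one)
qed

lemma gcomm_swap: "x \<in> carrier G \<Longrightarrow> y \<in> carrier G \<Longrightarrow> gcomm G y x = inv (gcomm G x y)"
  unfolding gcomm_def by (simp add: inv_mult_group m_assoc)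

lemma gcomm_self [simp]: "x \<in> carrier G \<Longrightarrow> gcomm G x x = \<one>"
  unfolding gcomm_def by (simp add: m_assoc)

lemma gcomm_one_left [simp]: "g \<in> carrier G \<Longrightarrow> gcomm G \<one> g = \<one>"
  unfolding gcomm_def by simp

lemma gcomm_one_right [simp]: "g \<in> carrier G \<Longrightarrow> gcomm G g \<one> = \<one>"
  unfolding gcomm_def by simp

lemma gcomm_center_left [simp]: "c \<in> group_center G \<Longrightarrow> g \<in> carrier G \<Longrightarrow> gcomm G c g = \<one>"
  using center_commute center_carrier gcomm_eq_one_iff by blast

lemma gcomm_center_right [simp]: "c \<in> group_center G \<Longrightarrow> g \<in> carrier G \<Longrightarrow> gcomm G g c = \<one>"
  using center_commute center_carrier gcomm_eq_one_iff by metis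

lemma centralizer_iff_gcomm:
  "S \<subseteq> carrier G \<Longrightarrow> g \<in> centralizer G S \<longleftrightarrow> g \<in> carrier G \<and> (\<forall>a \<in> S. gcomm G g a = \<one>)"
  unfolding centralizer_def using gcomm_eq_one_iff by blast

lemma generate_subset_centralizer:
  "S \<subseteq> carrier G \<Longrightarrow> T \<subseteq> centralizer G S \<Longrightarrow> generate G T \<subseteq> centralizer G S"
  by (simp add: centralizer_subgroup generate_subgroup_incl)

lemma gcomm_in_center_if_quotient_comm:
  assumes "comm_group (G Mod group_center G)" and x: "x \<in> carrier G" and y: "y \<in> carrier G"
  shows "gcomm G x y \<in> group_center G"
proof -
  let ?Z = "group_center G"
  interpret Z: normal ?Z G by (rule center_normal)
  interpret Q: comm_group "G Mod ?Z" by (rule assms(1))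
  have cosets: "?Z #> x \<in> carrier (G Mod ?Z)" "?Z #> y \<in> carrier (G Mod ?Z)"
    using x y by (auto simp: FactGroup_def intro: rcosetsI)
  have "?Z #> (x \<otimes> y) = ?Z #> (y \<otimes> x)"
    using Q.m_comm[OF cosets] x y by (simp add: FactGroup_def Z.rcos_sum)
  then have "x \<otimes> y \<in> ?Z #> (y \<otimes> x)"
    using x y center_subgroup rcos_self by (metis m_closed)
  then obtain h where h: "h \<in> ?Z" "x \<otimes> y = h \<otimes> (y \<otimes> x)" unfolding r_coset_def by auto
  have "h \<in> carrier G" using h(1) center_subgroup subgroup.subset by blast
  then have "gcomm G x y = h"
    unfolding gcomm_def using h(2) x y by (simp add: m_assoc inv_mult_group[symmetric])
  with h(1) show ?thesis by simp
qed

lemma set_mult_generate_subset: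
  "S \<subseteq> carrier G \<Longrightarrow> T \<subseteq> carrier G \<Longrightarrow> generate G S <#> generate G T \<subseteq> generate G (S \<union> T)"
proof -
  assume "S \<subseteq> carrier G" "T \<subseteq> carrier G"
  then have H: "subgroup (generate G (S \<union> T)) G" by (simp add: generate_is_subgroup)
  have "generate G S \<subseteq> generate G (S \<union> T)" "generate G T \<subseteq> generate G (S \<union> T)"
    by (simp_all add: mono_generate)
  then show ?thesis unfolding set_mult_def using subgroup.m_closed[OF H] by blast
qed

lemma set_mult_generate_absorb:
  assumes S: "S \<subseteq> carrier G" and T: "T \<subseteq> carrier G" and K: "K \<subseteq> carrier G"
    and M: "M \<subseteq> generate G T <#> K"
  shows "generate G S <#> M \<subseteq> generate G (S \<union> T) <#> K"
proof -
  have "generate G S <#> M \<subseteq> generate G S <#> (generate G T <#> K)"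
    using M by (rule mono_set_mult[OF subset_refl])
  also have "\<dots> = (generate G S <#> generate G T) <#> K"
    using S T K generate_incl by (simp add: set_mult_assoc)
  also have "\<dots> \<subseteq> generate G (S \<union> T) <#> K"
    using set_mult_generate_subset[OF S T] by (rule mono_set_mult[OF _ subset_refl])
  finally show ?thesis .
qed

lemma center_cyclic_of_prime_card:
  assumes finite: "finite (carrier G)" and prime: "Factorial_Ring.prime p" and order: "order G = p ^ k"
    and card: "card (group_center G) = p"
  shows "\<exists>z. ord z = p \<and> group_center G = generate G {z}"
proof -
  have finZ: "finite (group_center G)" using finite center_subset by (rule finite_subset[rotated])
  have "\<not> group_center G \<subseteq> {\<one>}"
  proof
    assume "group_center G \<subseteq> {\<one>}"
    then have "card (group_center G) \<le> 1" using card_mono[of "{\<one>}"] by fastforce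
    with card prime_gt_1_nat[OF prime] show False by simp
  qed
  then obtain z where z: "z \<in> group_center G" and z1: "z \<noteq> \<one>" by blast
  have zc: "z \<in> carrier G" using z by (rule center_carrier)
  have sub: "generate G {z} \<subseteq> group_center G"
    using z by (intro generate_subgroup_incl center_subgroup) auto
  have ord: "ord z = card (generate G {z})" using zc by (rule generate_pow_card)
  then have "ord z \<le> p" using card_mono[OF finZ sub] card by simp
  obtain i where i: "ord z = p ^ i"
    using ord_dvd_group_order[OF zc] order divides_primepow_nat[OF prime] by auto
  have "i \<noteq> 0" using i ord_eq_1[OF zc] z1 by auto
  moreover have "i < 2"
  proof (rule ccontr)
    assume "\<not> i < 2"
    then have "p ^ 2 \<le> p ^ i" using prime_gt_1_nat[OF prime] by (intro power_increasing) auto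
    moreover have "p < p ^ 2" using prime_gt_1_nat[OF prime] by (simp add: power2_eq_square)
    ultimately show False using i \<open>ord z \<le> p\<close> by simp
  qed
  ultimately have "ord z = p" using i by (cases i) (auto simp: numeral_2_eq_2)
  moreover have "generate G {z} = group_center G"
    using card_subset_eq[OF finZ sub] ord card calculation by simp
  ultimately show ?thesis by auto
qed

lemma symplectic_family_extend:
  assumes family: "symplectic_family G z k A B"
    and x: "x \<in> centralizer G (A ` {1..k} \<union> B ` {1..k})"
    and y: "y \<in> centralizer G (A ` {1..k} \<union> B ` {1..k})"
    and xy: "gcomm G x y = z"
  shows "symplectic_family G z (Suc k) (A(Suc k := x)) (B(Suc k := y))"
proof -
  have AB: "A i \<in> carrier G" "B i \<in> carrier G" if "i \<in> {1..k}" for i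
    using family that unfolding symplectic_family_def by auto
  then have S: "A ` {1..k} \<union> B ` {1..k} \<subseteq> carrier G" by auto
  have xc: "x \<in> carrier G" and yc: "y \<in> carrier G" using x y by (auto simp: centralizer_def)
  have "gcomm G x a = \<one> \<and> gcomm G a x = \<one> \<and> gcomm G y a = \<one> \<and> gcomm G a y = \<one>"
    if a: "a \<in> A ` {1..k} \<union> B ` {1..k}" for a
  proof -
    have "x \<otimes> a = a \<otimes> x" "y \<otimes> a = a \<otimes> y" using x y a unfolding centralizer_def by auto
    moreover have "a \<in> carrier G" using a S by blast
    ultimately show ?thesis using xc yc by (simp add: gcomm_eq_one_iff)
  qed
  then have "gcomm G x (A i) = \<one> \<and> gcomm G (A i) x = \<one> \<and> gcomm G y (A i) = \<one> \<and> gcomm G (A i) y = \<one>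
    \<and> gcomm G x (B i) = \<one> \<and> gcomm G (B i) x = \<one> \<and> gcomm G y (B i) = \<one> \<and> gcomm G (B i) y = \<one>"
    if "i \<in> {1..k}" for i
    using that by blast
  moreover have "{1..Suc k} = insert (Suc k) {1..k}" by auto
  ultimately show ?thesis
    using family xc yc xy unfolding symplectic_family_def by simp
qed

lemma gprod_Nil [simp]: "gprod G [] = \<one>"
  by (simp add: gprod_def)

lemma gprod_Cons [simp]: "gprod G (x # xs) = x \<otimes> gprod G xs"
  by (simp add: gprod_def)

lemma gprod_closed: "set xs \<subseteq> carrier G \<Longrightarrow> gprod G xs \<in> carrier G"
  by (induction xs) auto

lemma gprod_append:
  "set xs \<subseteq> carrier G \<Longrightarrow> set ys \<subseteq> carrier G \<Longrightarrow> gprod G (xs @ ys) = gprod G xs \<otimes> gprod G ys"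
  by (induction xs) (auto simp: gprod_closed m_assoc)

lemma gprod_in_center: "set xs \<subseteq> group_center G \<Longrightarrow> gprod G xs \<in> group_center G"
  by (induction xs) (auto simp: subgroup.one_closed subgroup.m_closed center_subgroup)

lemma gprod_map_inv_rev:
  "(\<And>j. j \<in> set L \<Longrightarrow> t j \<in> carrier G) \<Longrightarrow>
    gprod G (map (\<lambda>j. inv (t j)) (rev L)) = inv (gprod G (map t L))"
proof (induction L)
  case (Cons a L)
  then have "set (map (\<lambda>j. inv (t j)) (rev L)) \<subseteq> carrier G" "set (map t L) \<subseteq> carrier G"
    by auto
  with Cons show ?case by (simp add: gprod_append gprod_closed inv_mult_group)
qed simp

lemma gprod_map_mult_central:
  assumes "\<And>j. j \<in> set L \<Longrightarrow> c j \<in> group_center G" and "\<And>j. j \<in> set L \<Longrightarrow> u j \<in> carrier G"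
  shows "gprod G (map (\<lambda>j. c j \<otimes> u j) L) = gprod G (map c L) \<otimes> gprod G (map u L)"
  using assms
proof (induction L)
  case (Cons a L)
  let ?C = "gprod G (map c L)" and ?U = "gprod G (map u L)"
  have C: "?C \<in> group_center G" using Cons.prems by (intro gprod_in_center) auto
  have "c j \<in> carrier G" if "j \<in> set (a # L)" for j
    using Cons.prems(1)[OF that] center_carrier by blast
  then have carrier: "?C \<in> carrier G" "?U \<in> carrier G" "c a \<in> carrier G" "u a \<in> carrier G"
    using Cons.prems(2) by (auto intro!: gprod_closed)
  have "c a \<otimes> u a \<otimes> (?C \<otimes> ?U) = c a \<otimes> (u a \<otimes> ?C) \<otimes> ?U" using carrier by (simp add: m_assoc)
  also have "\<dots> = c a \<otimes> (?C \<otimes> u a) \<otimes> ?U" using carrier center_commute[OF C, of "u a"] by simp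
  also have "\<dots> = (c a \<otimes> ?C) \<otimes> (u a \<otimes> ?U)" using carrier by (simp add: m_assoc)
  finally show ?case using Cons by simp
qed simp

lemma gprod_central_cancel:
  assumes "\<And>j. j \<in> set L \<Longrightarrow> c j \<in> group_center G" and "\<And>j. j \<in> set L \<Longrightarrow> t j \<in> carrier G"
  shows "gprod G (map (\<lambda>j. c j \<otimes> t j) L) \<otimes> gprod G (map (\<lambda>j. inv (t j)) (rev L)) = gprod G (map c L)"
proof -
  have "c j \<in> carrier G" if "j \<in> set L" for j
    using assms(1)[OF that] center_carrier by blast
  then have carrier: "gprod G (map c L) \<in> carrier G" "gprod G (map t L) \<in> carrier G"
    using assms(2) by (auto intro!: gprod_closed)
  have "gprod G (map (\<lambda>j. c j \<otimes> t j) L) \<otimes> gprod G (map (\<lambda>j. inv (t j)) (rev L))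
      = gprod G (map c L) \<otimes> gprod G (map t L) \<otimes> inv (gprod G (map t L))"
    using assms by (simp add: gprod_map_mult_central gprod_map_inv_rev)
  then show ?thesis using carrier by (simp add: m_assoc)
qed

lemma gprod_map_single:
  assumes "distinct L" "i \<in> set L" "\<And>j. j \<in> set L \<Longrightarrow> j \<noteq> i \<Longrightarrow> c j = \<one>" "c i \<in> carrier G"
  shows "gprod G (map c L) = c i"
  using assms
proof (induction L)
  case (Cons a L)
  show ?case
  proof (cases "a = i")
    case True
    with Cons.prems have "gprod G (map c L) = \<one>"
      by (induction L) auto
    with True Cons.prems show ?thesis by simp
  next
    case False
    with Cons show ?thesis by simp
  qed
qed simp

lemma diagonal_double_kodaira_if_central:
  assumes carrier: "\<forall>j\<in>{1..b}. r1 j \<in> carrier G \<and> t1 j \<in> carrier G \<and> r2 j \<in> carrier G \<and> t2 j \<in> carrier G"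
    and z: "z \<in> group_center G"
    and generate: "generate G (r1 ` {1..b} \<union> t1 ` {1..b} \<union> r2 ` {1..b} \<union> t2 ` {1..b} \<union> {z}) = carrier G"
    and ord: "ord z = n"
    and surface1: "gprod G (map (\<lambda>j. gcomm G (inv (r1 j)) (inv (t1 j)) \<otimes> inv (t1 j)) (rev [1..<b+1]))
       \<otimes> gprod G (map t1 [1..<b+1]) = z"
    and surface2: "gprod G (map (\<lambda>j. gcomm G (inv (r2 j)) (t2 j) \<otimes> t2 j) [1..<b+1])
       \<otimes> gprod G (map (\<lambda>j. inv (t2 j)) (rev [1..<b+1])) = inv z"
    and comm: "\<And>j k. j \<in> {1..b} \<Longrightarrow> k \<in> {1..b} \<Longrightarrow>
        gcomm G (r1 j) (r2 k) = \<one> \<and> gcomm G (r1 j) (t2 k) = (if j = k then inv z else \<one>)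
      \<and> gcomm G (t1 j) (r2 k) = (if j = k then z else \<one>) \<and> gcomm G (t1 j) (t2 k) = \<one>"
  shows "diagonal_double_kodaira G b n r1 t1 r2 t2 z"
proof -
  have zc: "z \<in> carrier G" using z by (rule center_carrier)
  have z': "inv z \<in> group_center G" using z by (simp add: subgroup.m_inv_closed center_subgroup)
  have conj: "inv w \<otimes> z \<otimes> w = z" "w \<otimes> z \<otimes> inv w = z" "inv w \<otimes> inv z \<otimes> w = inv z"
    if "w \<in> carrier G" for w
    using center_conj[OF z that] center_conj[OF z, of "inv w"] center_conj[OF z' that] that by auto
  txt \<open>the right-hand sides of the relations with j > k\<close>
  have rhs1: "inv z \<otimes> u \<otimes> inv v \<otimes> z \<otimes> v \<otimes> inv u = \<one>" if "u \<in> carrier G" "v \<in> carrier G" for u v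
  proof -
    have "inv z \<otimes> u \<otimes> inv v \<otimes> z \<otimes> v \<otimes> inv u = inv z \<otimes> (u \<otimes> (inv v \<otimes> z \<otimes> v) \<otimes> inv u)"
      using that zc by (simp add: m_assoc)
    also have "\<dots> = \<one>" using that zc by (simp add: conj)
    finally show ?thesis .
  qed
  have rhs2: "u \<otimes> z \<otimes> inv w \<otimes> inv z \<otimes> w \<otimes> inv u = \<one>" if "u \<in> carrier G" "w \<in> carrier G" for u w
  proof -
    have "u \<otimes> z \<otimes> inv w \<otimes> inv z \<otimes> w \<otimes> inv u = u \<otimes> (z \<otimes> (inv w \<otimes> inv z \<otimes> w)) \<otimes> inv u"
      using that zc by (simp add: m_assoc)
    also have "\<dots> = \<one>" using that zc by (simp add: conj)
    finally show ?thesis .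
  qed
  show ?thesis
    unfolding diagonal_double_kodaira_def
  proof (intro conjI ballI impI)
  qed (use carrier zc generate ord surface1 surface2 in \<open>simp_all add: comm conj rhs1 rhs2 z z'\<close>)
qed

end

locale central_commutators = group +
  assumes gcomm_in_center: "x \<in> carrier G \<Longrightarrow> y \<in> carrier G \<Longrightarrow> gcomm G x y \<in> group_center G"
begin

lemma gcomm_commute: "x \<in> carrier G \<Longrightarrow> y \<in> carrier G \<Longrightarrow> g \<in> carrier G \<Longrightarrow> gcomm G x y \<otimes> g = g \<otimes> gcomm G x y"
  by (simp add: center_commute gcomm_in_center)

lemma gcomm_mult_left:
  assumes x: "x \<in> carrier G" and y: "y \<in> carrier G" and w: "w \<in> carrier G"
  shows "gcomm G (x \<otimes> y) w = gcomm G x w \<otimes> gcomm G y w"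
proof -
  let ?c = "gcomm G y w"
  have c: "?c \<in> carrier G" using y w by simp
  have conj: "y \<otimes> w \<otimes> inv y = ?c \<otimes> w" unfolding gcomm_def using y w by (simp add: m_assoc)
  have "gcomm G (x \<otimes> y) w = x \<otimes> (y \<otimes> w \<otimes> inv y) \<otimes> inv x \<otimes> inv w"
    unfolding gcomm_def using x y w by (simp add: m_assoc inv_mult_group)
  also have "\<dots> = (x \<otimes> ?c) \<otimes> (w \<otimes> inv x \<otimes> inv w)" using x w c by (simp add: conj m_assoc)
  also have "\<dots> = (?c \<otimes> x) \<otimes> (w \<otimes> inv x \<otimes> inv w)" using gcomm_commute[OF y w x] by simp
  also have "\<dots> = ?c \<otimes> gcomm G x w" using x w c by (simp add: gcomm_def m_assoc)
  also have "\<dots> = gcomm G x w \<otimes> ?c" using gcomm_commute[of y w "gcomm G x w"] x y w by simp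
  finally show ?thesis .
qed

lemma gcomm_mult_right:
  assumes x: "x \<in> carrier G" and y: "y \<in> carrier G" and w: "w \<in> carrier G"
  shows "gcomm G w (x \<otimes> y) = gcomm G w x \<otimes> gcomm G w y"
proof -
  have "gcomm G w (x \<otimes> y) = inv (gcomm G y w) \<otimes> inv (gcomm G x w)"
    using x y w by (simp add: gcomm_swap[of "x \<otimes> y" w] gcomm_mult_left inv_mult_group)
  also have "\<dots> = gcomm G w y \<otimes> gcomm G w x"
    using x y w by (simp add: gcomm_swap[of y w] gcomm_swap[of x w])
  also have "\<dots> = gcomm G w x \<otimes> gcomm G w y"
    using gcomm_commute[of w y "gcomm G w x"] x y w by simp
  finally show ?thesis .
qed

lemma gcomm_inv_left:
  assumes x: "x \<in> carrier G" and w: "w \<in> carrier G"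
  shows "gcomm G (inv x) w = inv (gcomm G x w)"
proof -
  have "gcomm G (inv x) w \<otimes> gcomm G x w = \<one>"
    using gcomm_mult_left[of "inv x" x w] x w by (simp add: gcomm_def)
  then show ?thesis using x w by (simp add: inv_equality)
qed

lemma gcomm_inv_right:
  assumes x: "x \<in> carrier G" and w: "w \<in> carrier G"
  shows "gcomm G w (inv x) = inv (gcomm G w x)"
  using x w by (simp add: gcomm_swap[of "inv x" w] gcomm_swap[of x w] gcomm_inv_left)

lemma gcomm_pow_left:
  assumes x: "x \<in> carrier G" and w: "w \<in> carrier G"
  shows "gcomm G (x [^] (n::nat)) w = gcomm G x w [^] n"
  by (induction n) (simp_all add: x w gcomm_mult_left)

lemma gcomm_pow_right:
  assumes x: "x \<in> carrier G" and w: "w \<in> carrier G"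
  shows "gcomm G w (x [^] (n::nat)) = gcomm G w x [^] n"
  by (induction n) (simp_all add: x w gcomm_mult_right)

end

locale prime_cyclic_center = central_commutators +
  fixes z :: 'a and p :: nat
  assumes finite_carrier: "finite (carrier G)"
    and prime_p: "Factorial_Ring.prime p"
    and ord_z: "ord z = p"
    and center_eq_generate: "group_center G = generate G {z}"
begin

lemma z_center: "z \<in> group_center G"
  by (simp add: center_eq_generate generate.incl)

lemma z_carrier [simp]: "z \<in> carrier G"
  using z_center by (rule center_carrier)

lemma card_center: "card (group_center G) = p"
  by (simp add: center_eq_generate ord_z flip: generate_pow_card)

lemma z_ne_one: "z \<noteq> \<one>"
  using ord_eq_1[OF z_carrier] ord_z prime_gt_1_nat[OF prime_p] by auto

lemma card_le_of_subset_center: "H \<subseteq> group_center G \<Longrightarrow> card H \<le> p"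
  using card_mono[OF finite_subset[OF center_subset finite_carrier]] card_center by metis

lemma center_eq_z_powers: "group_center G = {z [^] k | k. k \<in> (UNIV :: nat set)}"
  using prime_p by (simp add: center_eq_generate generate_pow_nat ord_z prime_gt_0_nat)

lemma z_pow_eq_one_iff: "z [^] (n::nat) = \<one> \<longleftrightarrow> p dvd n"
  by (simp add: pow_eq_id ord_z)

lemma center_element_cancel_unique:
  assumes "w \<in> group_center G"
  shows "\<exists>!i. i < p \<and> z [^] i \<otimes> w = \<one>"
proof -
  obtain t :: nat where w: "w = z [^] t" using assms center_eq_z_powers by auto
  have p: "p > 0" using prime_p by (simp add: prime_gt_0_nat)
  define i where "i = (p - t mod p) mod p"
  have "(i + t) mod p = (p - t mod p + t mod p) mod p"
    unfolding i_def by (simp add: mod_add_left_eq mod_add_right_eq)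
  also have "\<dots> = 0" using p by simp
  finally have "p dvd i + t" by (simp add: mod_eq_0_iff_dvd)
  then have "i < p \<and> z [^] i \<otimes> w = \<one>"
    using p by (simp add: i_def w nat_pow_mult z_pow_eq_one_iff)
  moreover have "i = i'" if "i < p" "i' < p" "z [^] i \<otimes> w = \<one>" "z [^] i' \<otimes> w = \<one>" for i i'
  proof -
    have "z [^] i \<otimes> w = z [^] i' \<otimes> w" using that by simp
    then have "z [^] i = z [^] i'" using assms center_carrier by simp
    then show ?thesis
      using inj_onD[OF ord_inj[OF z_carrier]] that by (simp add: ord_z)
  qed
  ultimately show ?thesis by blast
qed

lemma z_pow_of_nontrivial_center_element:
  assumes w: "w \<in> group_center G" and w1: "w \<noteq> \<one>"
  shows "\<exists>u::nat. w [^] u = z"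
proof -
  have wc: "w \<in> carrier G" using w by (rule center_carrier)
  obtain t :: nat where t: "w = z [^] t" using w center_eq_z_powers by auto
  have "w [^] p = \<one>" by (simp add: t nat_pow_pow z_pow_eq_one_iff)
  then have "ord w dvd p" using wc by (simp add: pow_eq_id)
  moreover have "ord w \<noteq> 1" using ord_eq_1[OF wc] w1 by blast
  ultimately have ord_w: "ord w = p" using prime_p by (auto simp: prime_nat_iff)
  have sub: "generate G {w} \<subseteq> group_center G"
    using w by (intro generate_subgroup_incl center_subgroup) auto
  have "card (generate G {w}) = card (group_center G)"
    by (simp add: card_center ord_w flip: generate_pow_card[OF wc])
  then have "generate G {w} = group_center G"
    using sub finite_carrier center_subset by (metis card_subset_eq finite_subset)
  then have "z \<in> generate G {w}" using z_center by simp
  then show ?thesis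
    using wc ord_w prime_p by (auto simp: generate_pow_nat prime_gt_0_nat)
qed

lemma centralizer_pair_iff:
  assumes S: "S \<subseteq> carrier G" and x: "x \<in> centralizer G S" and y: "y \<in> centralizer G S"
    and xy: "gcomm G x y = z" and g: "g \<in> centralizer G S"
  shows "x [^] (i::nat) \<otimes> y [^] (j::nat) \<otimes> g \<in> centralizer G (insert x (insert y S))
    \<longleftrightarrow> z [^] i \<otimes> gcomm G g y = \<one> \<and> z [^] j \<otimes> gcomm G x g = \<one>"
proof -
  have C: "subgroup (centralizer G S) G" using S by (rule centralizer_subgroup)
  have xc: "x \<in> carrier G" and yc: "y \<in> carrier G" and gc: "g \<in> carrier G"
    using x y g by (auto simp: centralizer_def)
  let ?c = "x [^] i \<otimes> y [^] j \<otimes> g"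
  have cC: "?c \<in> centralizer G S"
    using x y g C by (simp add: subgroup.m_closed subgroup_nat_pow_closed)
  have "gcomm G ?c y = z [^] i \<otimes> gcomm G g y"
    using xc yc gc xy by (simp add: gcomm_mult_left gcomm_pow_left)
  moreover have "gcomm G x ?c = z [^] j \<otimes> gcomm G x g"
    using xc yc gc xy by (simp add: gcomm_mult_right gcomm_pow_right)
  moreover have "gcomm G ?c x = \<one> \<longleftrightarrow> gcomm G x ?c = \<one>"
    using xc yc gc by (simp add: gcomm_swap[of x ?c])
  ultimately show ?thesis
    using cC S xc yc by (auto simp: centralizer_iff_gcomm)
qed

lemma centralizer_pair_exponents_exist:
  assumes S: "S \<subseteq> carrier G" and x: "x \<in> centralizer G S" and y: "y \<in> centralizer G S"
    and xy: "gcomm G x y = z" and g: "g \<in> centralizer G S"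
  shows "\<exists>i<p. \<exists>j<p. x [^] i \<otimes> y [^] j \<otimes> g \<in> centralizer G (insert x (insert y S))"
proof -
  have "x \<in> carrier G" "y \<in> carrier G" "g \<in> carrier G" using x y g by (auto simp: centralizer_def)
  then obtain i j where "i < p" "z [^] i \<otimes> gcomm G g y = \<one>" "j < p" "z [^] j \<otimes> gcomm G x g = \<one>"
    using center_element_cancel_unique gcomm_in_center by metis
  then show ?thesis using centralizer_pair_iff[OF assms] by blast
qed

lemma centralizer_pair_exponents_unique:
  assumes S: "S \<subseteq> carrier G" and x: "x \<in> centralizer G S" and y: "y \<in> centralizer G S"
    and xy: "gcomm G x y = z" and g: "g \<in> centralizer G S"
    and "i < p" "j < p" "i' < p" "j' < p"
    and "x [^] i \<otimes> y [^] j \<otimes> g \<in> centralizer G (insert x (insert y S))"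
    and "x [^] i' \<otimes> y [^] j' \<otimes> g \<in> centralizer G (insert x (insert y S))"
  shows "i = i' \<and> j = j'"
proof -
  have "x \<in> carrier G" "y \<in> carrier G" "g \<in> carrier G" using x y g by (auto simp: centralizer_def)
  then show ?thesis
    using assms centralizer_pair_iff[OF S x y xy g] center_element_cancel_unique gcomm_in_center by metis
qed

lemma card_centralizer_pair:
  assumes S: "S \<subseteq> carrier G" and x: "x \<in> centralizer G S" and y: "y \<in> centralizer G S"
    and xy: "gcomm G x y = z"
  shows "card (centralizer G S) = p * p * card (centralizer G (insert x (insert y S)))"
proof -
  let ?C = "centralizer G S" and ?C' = "centralizer G (insert x (insert y S))"
  have C: "subgroup ?C G" using S by (rule centralizer_subgroup)
  have C'C: "?C' \<subseteq> ?C" unfolding centralizer_def by auto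
  have xy_pow: "x [^] i \<otimes> y [^] j \<in> ?C" for i j :: nat
    using x y C by (simp add: subgroup.m_closed subgroup_nat_pow_closed)
  then have xy_pow_carrier: "x [^] i \<otimes> y [^] j \<in> carrier G" for i j :: nat
    using C subgroup.subset by blast
  define f where "f = (\<lambda>(i::nat, j::nat, c). inv (x [^] i \<otimes> y [^] j) \<otimes> c)"
  have f_inverse: "x [^] i \<otimes> y [^] j \<otimes> f (i, j, c) = c" if "c \<in> carrier G" for i j c
    using that xy_pow_carrier by (simp add: f_def)
  have f_closed: "f (i, j, c) \<in> ?C" if "c \<in> ?C" for i j c
    using that xy_pow C by (simp add: f_def subgroup.m_closed subgroup.m_inv_closed)
  have f_surj: "g \<in> f ` ({..<p} \<times> {..<p} \<times> ?C')" if g: "g \<in> ?C" for g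
  proof -
    obtain i j where ij: "i < p" "j < p" "x [^] i \<otimes> y [^] j \<otimes> g \<in> ?C'"
      using centralizer_pair_exponents_exist[OF S x y xy g] by blast
    have "g = f (i, j, x [^] i \<otimes> y [^] j \<otimes> g)"
      using g C subgroup.subset xy_pow_carrier by (fastforce simp: f_def)
    with ij show ?thesis by force
  qed
  have "inj_on f ({..<p} \<times> {..<p} \<times> ?C')"
  proof (rule inj_onI, clarsimp)
    fix i j c i' j' c'
    assume ij: "i < p" "j < p" "i' < p" "j' < p" and cC': "c \<in> ?C'" "c' \<in> ?C'"
      and eq: "f (i, j, c) = f (i', j', c')"
    have cc: "c \<in> carrier G" "c' \<in> carrier G" using cC' C'C C subgroup.subset by blast+
    have "x [^] i \<otimes> y [^] j \<otimes> f (i, j, c) \<in> ?C'"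
      using cC' f_inverse[OF cc(1)] by simp
    moreover have "x [^] i' \<otimes> y [^] j' \<otimes> f (i, j, c) \<in> ?C'"
      using cC' f_inverse[OF cc(2)] by (simp add: eq)
    ultimately have "i = i' \<and> j = j'"
      using centralizer_pair_exponents_unique[OF S x y xy] f_closed C'C cC' ij by blast
    with eq show "i = i' \<and> j = j' \<and> c = c'"
      using f_inverse cc by metis
  qed
  moreover have "f ` ({..<p} \<times> {..<p} \<times> ?C') = ?C"
    using f_closed f_surj C'C by auto
  ultimately have "bij_betw f ({..<p} \<times> {..<p} \<times> ?C') ?C"
    by (rule bij_betw_imageI)
  then show ?thesis
    by (simp add: bij_betw_same_card[symmetric] card_cartesian_product)
qed

lemma centralizer_subset_pair_mult:
  assumes S: "S \<subseteq> carrier G" and x: "x \<in> centralizer G S" and y: "y \<in> centralizer G S"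
    and xy: "gcomm G x y = z"
  shows "centralizer G S \<subseteq> generate G {x, y} <#> centralizer G (insert x (insert y S))"
proof
  fix g assume g: "g \<in> centralizer G S"
  then obtain i j :: nat where c: "x [^] i \<otimes> y [^] j \<otimes> g \<in> centralizer G (insert x (insert y S))"
    using centralizer_pair_exponents_exist[OF S x y xy] by blast
  have xc: "x \<in> carrier G" and yc: "y \<in> carrier G" and gc: "g \<in> carrier G"
    using x y g by (auto simp: centralizer_def)
  then have "g = inv (x [^] i \<otimes> y [^] j) \<otimes> (x [^] i \<otimes> y [^] j \<otimes> g)"
    by simp
  moreover have "inv (x [^] i \<otimes> y [^] j) \<in> generate G {x, y}"
    using generate_is_subgroup[of "{x, y}"] xc yc
    by (auto intro!: subgroup.m_inv_closed subgroup.m_closed subgroup_nat_pow_closed intro: generate.incl)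
  ultimately show "g \<in> generate G {x, y} <#> centralizer G (insert x (insert y S))"
    using c unfolding set_mult_def by blast
qed

lemma hyperbolic_pair_exists:
  assumes S: "S \<subseteq> carrier G" and decomp: "carrier G \<subseteq> generate G S <#> centralizer G S"
    and noncentral: "\<not> centralizer G S \<subseteq> group_center G"
  shows "\<exists>x \<in> centralizer G S. \<exists>y \<in> centralizer G S. gcomm G x y = z"
proof -
  have C: "subgroup (centralizer G S) G" using S by (rule centralizer_subgroup)
  obtain x where x: "x \<in> centralizer G S" and "x \<notin> group_center G" using noncentral by blast
  then have xc: "x \<in> carrier G" using C subgroup.subset by blast
  with \<open>x \<notin> group_center G\<close> obtain g where gc: "g \<in> carrier G" and "x \<otimes> g \<noteq> g \<otimes> x"
    unfolding group_center_def by auto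
  then obtain h c where h: "h \<in> generate G S" and c: "c \<in> centralizer G S" and g: "g = h \<otimes> c"
    using decomp unfolding set_mult_def by blast
  have cc: "c \<in> carrier G" using c C subgroup.subset by blast
  have "S \<subseteq> centralizer G {x}" using x S unfolding centralizer_def by auto
  then have "h \<in> centralizer G {x}" using h xc generate_subset_centralizer[of "{x}"] by blast
  then have hc: "h \<in> carrier G" and hx: "h \<otimes> x = x \<otimes> h" unfolding centralizer_def by auto
  have "x \<otimes> c \<noteq> c \<otimes> x"
  proof
    assume xc_comm: "x \<otimes> c = c \<otimes> x"
    have "x \<otimes> g = (x \<otimes> h) \<otimes> c" using hc xc cc by (simp add: g m_assoc)
    also have "\<dots> = h \<otimes> (x \<otimes> c)" using hx[symmetric] hc xc cc by (simp add: m_assoc)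
    also have "\<dots> = g \<otimes> x" using xc_comm hc xc cc by (simp add: g m_assoc)
    finally show False using \<open>x \<otimes> g \<noteq> g \<otimes> x\<close> by contradiction
  qed
  then have "gcomm G x c \<noteq> \<one>" using gcomm_eq_one_iff xc cc by blast
  then obtain u where u: "gcomm G x c [^] (u::nat) = z"
    using z_pow_of_nontrivial_center_element gcomm_in_center xc cc by blast
  have "c [^] u \<in> centralizer G S" using C c by (rule subgroup_nat_pow_closed)
  moreover have "gcomm G x (c [^] u) = z" using u xc cc by (simp add: gcomm_pow_right)
  ultimately show ?thesis using x by blast
qed

definition symplectic_partial_basis :: "nat \<Rightarrow> (nat \<Rightarrow> 'a) \<Rightarrow> (nat \<Rightarrow> 'a) \<Rightarrow> bool" where
  "symplectic_partial_basis k A B \<longleftrightarrow> symplectic_family G z k A B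
     \<and> card (centralizer G (A ` {1..k} \<union> B ` {1..k})) * p ^ (2 * k) = order G
     \<and> carrier G \<subseteq> generate G (A ` {1..k} \<union> B ` {1..k}) <#> centralizer G (A ` {1..k} \<union> B ` {1..k})"

lemma symplectic_partial_basis_0: "symplectic_partial_basis 0 A B"
proof -
  have "g \<in> generate G {} <#> carrier G" if "g \<in> carrier G" for g
    using generate.one[of G "{}"] that l_one[OF that] unfolding set_mult_def by blast
  then show ?thesis
    unfolding symplectic_partial_basis_def symplectic_family_def centralizer_def order_def by auto
qed

lemma symplectic_partial_basis_Suc:
  assumes basis: "symplectic_partial_basis k A B" and small: "p ^ (2 * k + 1) < order G"
  shows "\<exists>x y. symplectic_partial_basis (Suc k) (A(Suc k := x)) (B(Suc k := y))"
proof -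
  let ?S = "A ` {1..k} \<union> B ` {1..k}"
  have family: "symplectic_family G z k A B"
    and card: "card (centralizer G ?S) * p ^ (2 * k) = order G"
    and decomp: "carrier G \<subseteq> generate G ?S <#> centralizer G ?S"
    using basis unfolding symplectic_partial_basis_def by auto
  have S: "?S \<subseteq> carrier G" using family unfolding symplectic_family_def by auto
  have "\<not> centralizer G ?S \<subseteq> group_center G"
  proof
    assume "centralizer G ?S \<subseteq> group_center G"
    then have "card (centralizer G ?S) * p ^ (2 * k) \<le> p * p ^ (2 * k)"
      by (intro mult_le_mono1 card_le_of_subset_center)
    with small show False unfolding card by simp
  qed
  then obtain x y where x: "x \<in> centralizer G ?S" and y: "y \<in> centralizer G ?S" and xy: "gcomm G x y = z"
    using hyperbolic_pair_exists[OF S decomp] by blast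
  let ?C' = "centralizer G (insert x (insert y ?S))"
  have xy_carrier: "{x, y} \<subseteq> carrier G" using x y by (auto simp: centralizer_def)
  have "carrier G \<subseteq> generate G ?S <#> centralizer G ?S" by (rule decomp)
  also have "\<dots> \<subseteq> generate G (?S \<union> {x, y}) <#> ?C'"
    by (rule set_mult_generate_absorb[OF S xy_carrier _ centralizer_subset_pair_mult[OF S x y xy]])
      (auto simp: centralizer_def)
  finally have "carrier G \<subseteq> generate G (?S \<union> {x, y}) <#> ?C'" .
  moreover have "?S \<union> {x, y} = insert x (insert y ?S)" by blast
  moreover have "card ?C' * p ^ (2 * Suc k) = order G"
    using card card_centralizer_pair[OF S x y xy] by (simp add: mult_ac)
  moreover have "(A(Suc k := x)) ` {1..Suc k} \<union> (B(Suc k := y)) ` {1..Suc k} = insert x (insert y ?S)"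
    by (auto simp: atLeastAtMostSuc_conv fun_upd_image)
  ultimately have "symplectic_partial_basis (Suc k) (A(Suc k := x)) (B(Suc k := y))"
    unfolding symplectic_partial_basis_def
    using symplectic_family_extend[OF family x y xy] by simp
  then show ?thesis by blast
qed

lemma symplectic_basis_exists:
  assumes order: "order G = p ^ (2 * n + 1)"
  shows "\<exists>A B. symplectic_family G z n A B \<and> generate G (A ` {1..n} \<union> B ` {1..n} \<union> {z}) = carrier G"
proof -
  have "\<exists>A B. symplectic_partial_basis k A B" if "k \<le> n" for k
    using that
  proof (induction k)
    case 0
    show ?case using symplectic_partial_basis_0 by blast
  next
    case (Suc k)
    then obtain A B where "symplectic_partial_basis k A B" by auto
    moreover have "p ^ (2 * k + 1) < order G"
      using Suc.prems prime_gt_1_nat[OF prime_p] by (simp add: order)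
    ultimately show ?case using symplectic_partial_basis_Suc by blast
  qed
  then obtain A B where basis: "symplectic_partial_basis n A B" by blast
  let ?S = "A ` {1..n} \<union> B ` {1..n}"
  have family: "symplectic_family G z n A B"
    and card: "card (centralizer G ?S) * p ^ (2 * n) = order G"
    and decomp: "carrier G \<subseteq> generate G ?S <#> centralizer G ?S"
    using basis unfolding symplectic_partial_basis_def by auto
  have S: "?S \<subseteq> carrier G" using family unfolding symplectic_family_def by auto
  have "card (centralizer G ?S) = p"
    using card order prime_gt_0_nat[OF prime_p] by simp
  moreover have "group_center G \<subseteq> centralizer G ?S"
    using S unfolding group_center_def centralizer_def by auto
  ultimately have "centralizer G ?S = generate G {z}"
    using card_center finite_subset[OF _ finite_carrier] card_subset_eq center_eq_generate
    by (metis centralizer_subgroup[OF S] subgroup.subset)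
  with decomp have "carrier G \<subseteq> generate G (?S \<union> {z})"
    using set_mult_generate_subset[of ?S "{z}"] S by auto
  then have "generate G (?S \<union> {z}) = carrier G"
    using generate_incl[of "?S \<union> {z}"] S by auto
  with family show ?thesis by blast
qed

end

locale kodaira_construction = central_commutators +
  fixes b :: nat and z :: 'a and A B :: "nat \<Rightarrow> 'a"
  assumes two_le_b: "2 \<le> b" and z_center: "z \<in> group_center G" and z_ne_one: "z \<noteq> \<one>"
    and symplectic: "symplectic_family G z (2 * b) A B"
    and generated: "generate G (A ` {1..2 * b} \<union> B ` {1..2 * b} \<union> {z}) = carrier G"
begin

text \<open>The twists in r1 1 and t2 2 supply the z and z^-1 of the two surface relations.\<close>

definition r1 :: "nat \<Rightarrow> 'a" where "r1 j = (if j = 1 then A 1 \<otimes> inv (B (b + 1)) else A j)"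
definition t1 :: "nat \<Rightarrow> 'a" where "t1 j = A (b + j)"
definition r2 :: "nat \<Rightarrow> 'a" where "r2 j = B (b + j)"
definition t2 :: "nat \<Rightarrow> 'a" where "t2 j = (if j = 2 then inv (B 2) \<otimes> inv (A (b + 2)) else inv (B j))"

lemma z_carrier [simp]: "z \<in> carrier G"
  using z_center by (rule center_carrier)

lemma A_carrier [simp]: "1 \<le> i \<Longrightarrow> i \<le> 2 * b \<Longrightarrow> A i \<in> carrier G"
  and B_carrier [simp]: "1 \<le> i \<Longrightarrow> i \<le> 2 * b \<Longrightarrow> B i \<in> carrier G"
  using symplectic unfolding symplectic_family_def by auto

lemma gcomm_A_B [simp]:
  "1 \<le> i \<Longrightarrow> i \<le> 2 * b \<Longrightarrow> 1 \<le> j \<Longrightarrow> j \<le> 2 * b \<Longrightarrow> gcomm G (A i) (B j) = (if i = j then z else \<one>)"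
  and gcomm_A_A [simp]: "1 \<le> i \<Longrightarrow> i \<le> 2 * b \<Longrightarrow> 1 \<le> j \<Longrightarrow> j \<le> 2 * b \<Longrightarrow> gcomm G (A i) (A j) = \<one>"
  and gcomm_B_B [simp]: "1 \<le> i \<Longrightarrow> i \<le> 2 * b \<Longrightarrow> 1 \<le> j \<Longrightarrow> j \<le> 2 * b \<Longrightarrow> gcomm G (B i) (B j) = \<one>"
  using symplectic unfolding symplectic_family_def by auto

lemma gcomm_B_A [simp]:
  "1 \<le> i \<Longrightarrow> i \<le> 2 * b \<Longrightarrow> 1 \<le> j \<Longrightarrow> j \<le> 2 * b \<Longrightarrow> gcomm G (B j) (A i) = (if i = j then inv z else \<one>)"
  by (simp add: gcomm_swap[of "A i" "B j"])

lemmas gcomm_expand = gcomm_mult_left gcomm_mult_right gcomm_inv_left gcomm_inv_right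

lemma kodaira_carrier: "j \<in> {1..b} \<Longrightarrow> r1 j \<in> carrier G \<and> t1 j \<in> carrier G \<and> r2 j \<in> carrier G \<and> t2 j \<in> carrier G"
  using two_le_b by (auto simp: r1_def t1_def r2_def t2_def)

lemma kodaira_gcomm:
  assumes "j \<in> {1..b}" "k \<in> {1..b}"
  shows "gcomm G (r1 j) (r2 k) = \<one> \<and> gcomm G (r1 j) (t2 k) = (if j = k then inv z else \<one>)
    \<and> gcomm G (t1 j) (r2 k) = (if j = k then z else \<one>) \<and> gcomm G (t1 j) (t2 k) = \<one>"
  using assms two_le_b by (auto simp: r1_def t1_def r2_def t2_def gcomm_expand)

lemma kodaira_surface_gcomm:
  assumes "j \<in> {1..b}"
  shows "gcomm G (inv (r1 j)) (inv (t1 j)) = (if j = 1 then z else \<one>)"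
    and "gcomm G (inv (r2 j)) (t2 j) = (if j = 2 then inv z else \<one>)"
  using assms two_le_b by (auto simp: r1_def t1_def r2_def t2_def gcomm_expand)

lemma kodaira_surface_relations:
  shows "gprod G (map (\<lambda>j. gcomm G (inv (r1 j)) (inv (t1 j)) \<otimes> inv (t1 j)) (rev [1..<b+1]))
      \<otimes> gprod G (map t1 [1..<b+1]) = z"
    and "gprod G (map (\<lambda>j. gcomm G (inv (r2 j)) (t2 j) \<otimes> t2 j) [1..<b+1])
      \<otimes> gprod G (map (\<lambda>j. inv (t2 j)) (rev [1..<b+1])) = inv z"
proof -
  let ?L = "[1..<b+1]"
  have set_L: "set ?L = {1..b}" by auto
  have carrier: "j \<in> set ?L \<Longrightarrow> r1 j \<in> carrier G \<and> t1 j \<in> carrier G \<and> r2 j \<in> carrier G \<and> t2 j \<in> carrier G" for j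
    using kodaira_carrier set_L by blast
  have inv_inv_t1: "map (\<lambda>j. inv (inv (t1 j))) (rev (rev ?L)) = map t1 ?L"
    using carrier by (simp only: rev_rev_ident map_eq_conv) auto
  have "gprod G (map (\<lambda>j. gcomm G (inv (r1 j)) (inv (t1 j)) \<otimes> inv (t1 j)) (rev ?L))
      \<otimes> gprod G (map (\<lambda>j. inv (inv (t1 j))) (rev (rev ?L)))
      = gprod G (map (\<lambda>j. gcomm G (inv (r1 j)) (inv (t1 j))) (rev ?L))"
    using carrier gcomm_in_center by (intro gprod_central_cancel) auto
  then have "gprod G (map (\<lambda>j. gcomm G (inv (r1 j)) (inv (t1 j)) \<otimes> inv (t1 j)) (rev ?L))
      \<otimes> gprod G (map t1 ?L) = gprod G (map (\<lambda>j. gcomm G (inv (r1 j)) (inv (t1 j))) (rev ?L))"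
    by (simp only: inv_inv_t1)
  also have "\<dots> = z"
    using kodaira_surface_gcomm(1) set_L two_le_b by (subst gprod_map_single[of _ 1]) auto
  finally show "gprod G (map (\<lambda>j. gcomm G (inv (r1 j)) (inv (t1 j)) \<otimes> inv (t1 j)) (rev ?L))
      \<otimes> gprod G (map t1 ?L) = z" .
  have "gprod G (map (\<lambda>j. gcomm G (inv (r2 j)) (t2 j) \<otimes> t2 j) ?L)
      \<otimes> gprod G (map (\<lambda>j. inv (t2 j)) (rev ?L)) = gprod G (map (\<lambda>j. gcomm G (inv (r2 j)) (t2 j)) ?L)"
    using carrier gcomm_in_center by (intro gprod_central_cancel) auto
  also have "\<dots> = inv z"
    using kodaira_surface_gcomm(2) set_L two_le_b by (subst gprod_map_single[of _ 2]) auto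
  finally show "gprod G (map (\<lambda>j. gcomm G (inv (r2 j)) (t2 j) \<otimes> t2 j) ?L)
      \<otimes> gprod G (map (\<lambda>j. inv (t2 j)) (rev ?L)) = inv z" .
qed

lemma kodaira_generate:
  "generate G (r1 ` {1..b} \<union> t1 ` {1..b} \<union> r2 ` {1..b} \<union> t2 ` {1..b} \<union> {z}) = carrier G"
proof -
  let ?T = "r1 ` {1..b} \<union> t1 ` {1..b} \<union> r2 ` {1..b} \<union> t2 ` {1..b} \<union> {z}"
  have T: "?T \<subseteq> carrier G" using kodaira_carrier by auto
  interpret H: subgroup "generate G ?T" G using T by (rule generate_is_subgroup)
  have gens: "r1 j \<in> generate G ?T" "t1 j \<in> generate G ?T" "r2 j \<in> generate G ?T" "t2 j \<in> generate G ?T"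
    if "j \<in> {1..b}" for j
    using that by (auto intro: generate.incl)
  have "A i \<in> generate G ?T \<and> B i \<in> generate G ?T" if i: "i \<in> {1..2 * b}" for i
  proof (cases "i \<le> b")
    case False
    then have "A i = t1 (i - b)" "B i = r2 (i - b)" and "i - b \<in> {1..b}"
      using i by (auto simp: t1_def r2_def)
    then show ?thesis using gens by metis
  next
    case True
    then have i': "i \<in> {1..b}" using i by auto
    have "A 1 = r1 1 \<otimes> r2 1" using two_le_b by (simp add: r1_def r2_def m_assoc)
    moreover have "B 2 = inv (t2 2 \<otimes> t1 2)"
      using two_le_b by (simp add: t1_def t2_def m_assoc inv_mult_group)
    moreover have "A i = r1 i" if "i \<noteq> 1" using that by (simp add: r1_def)
    moreover have "B i = inv (t2 i)" if "i \<noteq> 2" using that i' by (simp add: t2_def)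
    ultimately show ?thesis
      using gens i' two_le_b by (metis H.m_closed H.m_inv_closed atLeastAtMost_iff one_le_numeral order_refl)
  qed
  then have "generate G (A ` {1..2 * b} \<union> B ` {1..2 * b} \<union> {z}) \<subseteq> generate G ?T"
    by (intro generate_subgroup_incl H.subgroup_axioms) (auto intro: generate.incl)
  then show ?thesis using generated generate_incl[OF T] by auto
qed

lemma kodaira_not_strong: "\<not> ddk_strong G b r1 t1 r2 t2 z"
proof
  let ?K1 = "r1 ` {1..b} \<union> t1 ` {1..b} \<union> {z}"
  assume "ddk_strong G b r1 t1 r2 t2 z"
  then have K1: "generate G ?K1 = carrier G" by (simp add: ddk_strong_def)
  have A2: "A 2 \<in> carrier G" and B2: "B 2 \<in> carrier G" using two_le_b by auto
  have "gcomm G (r1 j) (A 2) = \<one>" "gcomm G (t1 j) (A 2) = \<one>" if "j \<in> {1..b}" for j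
    using that two_le_b by (auto simp: r1_def t1_def gcomm_expand)
  then have "?K1 \<subseteq> centralizer G {A 2}"
    using kodaira_carrier A2 z_center by (auto simp: centralizer_iff_gcomm)
  then have "carrier G \<subseteq> centralizer G {A 2}"
    using K1 A2 generate_subset_centralizer[of "{A 2}" ?K1] by auto
  then have "gcomm G (B 2) (A 2) = \<one>" using B2 A2 by (auto simp: centralizer_iff_gcomm)
  moreover have "gcomm G (B 2) (A 2) = inv z" using two_le_b by simp
  ultimately show False using z_ne_one by (metis inv_inv inv_one z_carrier)
qed

lemma kodaira_structure: "diagonal_double_kodaira G b (ord z) r1 t1 r2 t2 z"
  using kodaira_carrier z_center kodaira_generate kodaira_surface_relations kodaira_gcomm
  by (intro diagonal_double_kodaira_if_central) auto

end

theorem theorem2p10: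
  fixes G :: "('a, 'c) monoid_scheme" and b p :: nat
  assumes "group G" and "b \<ge> 2" and "Factorial_Ring.prime p" and "p \<ge> 5"
    and "extra_special G p" and "order G = p ^ (4 * b + 1)"
  shows "\<exists>r1 t1 r2 t2 z. diagonal_double_kodaira G b p r1 t1 r2 t2 z
                         \<and> \<not> ddk_strong G b r1 t1 r2 t2 z"
proof -
  interpret group G by fact
  have finite: "finite (carrier G)" and card: "card (group_center G) = p"
    and quotient: "comm_group (G Mod group_center G)" and "\<exists>k. order G = p ^ k"
    using \<open>extra_special G p\<close> unfolding extra_special_def by auto
  interpret central_commutators G
    using gcomm_in_center_if_quotient_comm[OF quotient] by unfold_locales
  obtain z where "ord z = p" and "group_center G = generate G {z}"
    using center_cyclic_of_prime_card finite \<open>Factorial_Ring.prime p\<close> \<open>\<exists>k. order G = p ^ k\<close> card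
    by blast
  then interpret prime_cyclic_center G z p
    using finite \<open>Factorial_Ring.prime p\<close> by unfold_locales
  have "order G = p ^ (2 * (2 * b) + 1)" using \<open>order G = p ^ (4 * b + 1)\<close> by simp
  then obtain A B where "symplectic_family G z (2 * b) A B"
    and "generate G (A ` {1..2 * b} \<union> B ` {1..2 * b} \<union> {z}) = carrier G"
    using symplectic_basis_exists by blast
  then interpret K: kodaira_construction G b z A B
    using \<open>b \<ge> 2\<close> z_center z_ne_one by unfold_locales
  show ?thesis
    using K.kodaira_structure K.kodaira_not_strong unfolding ord_z by blast
qed

end
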